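(* Let $F=\{\mathbb{R}^{n};f_{1},\dots,f_{m}\}$ be an IFS of contractive similitudes (at least two distinct maps) that obeys the open set condition, with contraction factors $\lambda_i=s^{a_i}$ where $s=\max_i\lambda_i$. Suppose $a_{i}\in\mathbb{N}$ and the costs are $c_{i}=a_{i}$ for all $i=1,\dots,m$. Then for every closed $T\subset\mathbb{R}^n$ and every $\mathbf{i}\in\Sigma^{\infty}$ the tiling $\Pi_{T}(\mathbf{i})$ is commensurate; in particular $\Pi(\mathbf{i})=\Pi_A(\mathbf{i})$ and $\Xi(\mathbf{i})=\Pi_{\overline{C}}(\mathbf{i})$ are commensurate.
   Context: An IFS $F$ consists of maps $f_{i}:\mathbb{R}^{n}\to\mathbb{R}^{n}$ with $|f_{i}(x)-f_{i}(y)|=\lambda_{i}|x-y|$, $\lambda_{i}\in(0,1)$; its attractor $A$ is the unique nonempty compact set with $A=\bigcup_i f_i(A)$. $F$ obeys the open set condition if there is a nonempty open $O$ with $f_i(O)\subset O$ for all $i$ and $f_{i}(O)\cap f_{j}(O)=\emptyset$ for $i\neq j$. Let $\Sigma=\{1,\dots,m\}$, $\Sigma^{*}$ the nonempty finite words, $\Sigma^{\infty}$ the infinite sequences; $f_{\mathbf{i}}=f_{i_{1}}\circ\cdots\circ f_{i_{k}}$ for a word. The central open set is $C=\{x:d(x,A)<d(x,H)\}$ where $H=\bigcup\{f_{\mathbf{i}}^{-1}f_{\mathbf{j}}(A):\mathbf{i},\mathbf{j}\in\Sigma^{*},i_1\neq j_1\}$ and $d(x,Y)=\inf_{y\in Y}|x-y|$.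 For $\mathbf{i}\in\Sigma^{\infty}$: $\mathbf{i}|k=i_{1}\dots i_{k}$, $\mathbf{i}|0=\emptyset$, $f_{(\mathbf{j}|l)}=f_{j_{1}}\circ\cdots\circ f_{j_{l}}$, $f_{-(\mathbf{i}|k)}=f_{i_{1}}^{-1}\circ\cdots\circ f_{i_{k}}^{-1}$, $c(\mathbf{i}|k)=c_{i_{1}}+\cdots+c_{i_{k}}$, $c(\emptyset)=0$; \[ \Pi_{T}(\mathbf{i}|k)=f_{-(\mathbf{i}|k)}\big(\{f_{(\mathbf{j}|l)}(T):\mathbf{j}\in\Sigma^{\infty},\ l\in\mathbb{N},\ c(\mathbf{j}|l-1)\leq c(\mathbf{i}|k)<c(\mathbf{j}|l)\}\big),\quad \Pi_{T}(\mathbf{i})=\bigcup_{k\geq1}\Pi_{T}(\mathbf{i}|k). \] Each tile of $\Pi_T(\mathbf{i})$ is an image of $T$ under a similitude; its size is measured relative to $T$ by the similarity ratio. A tiling is commensurate if the sizes of all its tiles belong to a geometric progression. *)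

theory Defs
  imports "HOL-Analysis.Analysis"
begin

text \<open>Alphabet: indices 0..<m (the paper's 1..m shifted by one).
  Finite words are lists, infinite words are sequences nat => nat.\<close>

definition seqs :: "nat \<Rightarrow> (nat \<Rightarrow> nat) set" where
  "seqs m = {w. \<forall>k. w k < m}"

definition words :: "nat \<Rightarrow> nat list set" where
  "words m = {w. w \<noteq> [] \<and> set w \<subseteq> {..<m}}"

definition pref :: "(nat \<Rightarrow> nat) \<Rightarrow> nat \<Rightarrow> nat list" where
  "pref w k = map w [0..<k]"

definition fw :: "(nat \<Rightarrow> 'a \<Rightarrow> 'a) \<Rightarrow> nat list \<Rightarrow> 'a \<Rightarrow> 'a" where
  "fw f w = foldr (\<circ>) (map f w) id"

definition fwinv :: "(nat \<Rightarrow> 'a \<Rightarrow> 'a) \<Rightarrow> nat list \<Rightarrow> 'a \<Rightarrow> 'a" where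
  "fwinv f w = foldr (\<circ>) (map (\<lambda>i. inv (f i)) w) id"

definition cost :: "(nat \<Rightarrow> real) \<Rightarrow> nat list \<Rightarrow> real" where
  "cost c w = sum_list (map c w)"

definition similitude :: "('a::metric_space \<Rightarrow> 'a) \<Rightarrow> real \<Rightarrow> bool" where
  "similitude g r \<longleftrightarrow> r > 0 \<and> (\<forall>x y. dist (g x) (g y) = r * dist x y)"

definition sim_ratio :: "('a::metric_space \<Rightarrow> 'a) \<Rightarrow> real" where
  "sim_ratio g = (SOME r. similitude g r)"

definition OSC :: "nat \<Rightarrow> (nat \<Rightarrow> 'a::topological_space \<Rightarrow> 'a) \<Rightarrow> bool" where
  "OSC m f \<longleftrightarrow> (\<exists>U. open U \<and> U \<noteq> {} \<and> (\<forall>i<m. f i ` U \<subseteq> U) \<and>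
      (\<forall>i<m. \<forall>j<m. i \<noteq> j \<longrightarrow> f i ` U \<inter> f j ` U = {}))"

definition attractor :: "nat \<Rightarrow> (nat \<Rightarrow> 'a::metric_space \<Rightarrow> 'a) \<Rightarrow> 'a set" where
  "attractor m f = (THE A. compact A \<and> A \<noteq> {} \<and> A = (\<Union>i<m. f i ` A))"

definition Hset :: "nat \<Rightarrow> (nat \<Rightarrow> 'a::metric_space \<Rightarrow> 'a) \<Rightarrow> 'a set" where
  "Hset m f = \<Union>{inv (fw f u) ` (fw f v ` attractor m f) | u v.
       u \<in> words m \<and> v \<in> words m \<and> hd u \<noteq> hd v}"

definition central_open_set :: "nat \<Rightarrow> (nat \<Rightarrow> 'a::metric_space \<Rightarrow> 'a) \<Rightarrow> 'a set" where
  "central_open_set m f = {x. infdist x (attractor m f) < infdist x (Hset m f)}"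

text \<open>Tiles of Pi_T(i): a tile is recorded together with the similitude that produces it
  from T, i.e. as the pair (g, g ` T); its size is the similarity ratio of g.\<close>
definition tiling :: "nat \<Rightarrow> (nat \<Rightarrow> 'a \<Rightarrow> 'a) \<Rightarrow> (nat \<Rightarrow> real) \<Rightarrow> 'a set
     \<Rightarrow> (nat \<Rightarrow> nat) \<Rightarrow> (('a \<Rightarrow> 'a) \<times> 'a set) set" where
  "tiling m f c T w = {(g, g ` T) | g. \<exists>k j l. k \<ge> 1 \<and> j \<in> seqs m \<and>
       cost c (pref j (l - 1)) \<le> cost c (pref w k) \<and> cost c (pref w k) < cost c (pref j l) \<and>
       g = fwinv f (pref w k) \<circ> fw f (pref j l)}"

definition commensurate :: "(('a::metric_space \<Rightarrow> 'a) \<times> 'a set) set \<Rightarrow> bool" where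
  "commensurate P \<longleftrightarrow> (\<exists>q r. q > 0 \<and> r > 0 \<and>
       (\<forall>t\<in>P. \<exists>k::nat. sim_ratio (fst t) = q * r ^ k))"

end

theory Submission
  imports Defs
begin

text \<open>Each tile of \<Pi>_T(i) is the image of T under f_-(i|k) \<circ> f_(j|l), a similitude of ratio
  s^(a(j|l) - a(i|k)) whatever T is. Because the costs are the exponents a_i, the inequalities
  c(j|l-1) \<le> c(i|k) < c(j|l) bound this exponent by M = max a_i, so all tile sizes lie in the
  progression s^M, s^M s^-1, s^M s^-2, ...\<close>

lemma similitude_comp:
  "similitude g r \<Longrightarrow> similitude h t \<Longrightarrow> similitude (g \<circ> h) (r * t)"
  by (simp add: similitude_def)

lemma similitude_surj:
  fixes g :: "'a::euclidean_space \<Rightarrow> 'a"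
  assumes "similitude g r"
  shows "surj g"
proof -
  define h where "h x = g x - g 0" for x
  have r: "r > 0" and dist_h: "\<forall>x y. dist (h x) (h y) = r * dist x y"
    using assms by (simp_all add: similitude_def h_def dist_norm)
  have "linear h"
    by (rule scaling_linear[OF _ dist_h]) (simp add: h_def)
  moreover have "inj h"
  proof (rule injI)
    fix x y
    assume "h x = h y"
    then have "r * dist x y = 0"
      using dist_h by (metis dist_self)
    then show "x = y"
      using r by simp
  qed
  ultimately have "surj h"
    using linear_inj_imp_surj by blast
  show "surj g"
  proof (rule surjI)
    fix y
    show "g (inv h (y - g 0)) = y"
      using surj_f_inv_f[OF \<open>surj h\<close>, of "y - g 0"] by (simp add: h_def)
  qed
qed

lemma similitude_inv:
  fixes g :: "'a::euclidean_space \<Rightarrow> 'a"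
  assumes "similitude g r"
  shows "similitude (inv g) (inverse r)"
proof -
  have "r > 0"
    using assms by (simp add: similitude_def)
  have "dist (inv g x) (inv g y) = inverse r * dist x y" for x y
  proof -
    have "dist x y = dist (g (inv g x)) (g (inv g y))"
      using surj_f_inv_f[OF similitude_surj[OF assms]] by simp
    also have "\<dots> = r * dist (inv g x) (inv g y)"
      using assms by (simp add: similitude_def)
    finally show ?thesis
      using \<open>r > 0\<close> by (simp add: field_simps)
  qed
  with \<open>r > 0\<close> show ?thesis
    by (simp add: similitude_def)
qed

lemma similitude_fw:
  assumes "\<And>i. i \<in> set u \<Longrightarrow> similitude (f i) (lam i)"
  shows "similitude (fw f u) (prod_list (map lam u))"
  using assms
proof (induction u)
  case Nil
  then show ?case by (simp add: fw_def similitude_def)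
next
  case (Cons i u)
  then have "similitude (f i \<circ> fw f u) (lam i * prod_list (map lam u))"
    by (intro similitude_comp) auto
  then show ?case by (simp add: fw_def comp_def)
qed

lemma similitude_fwinv:
  fixes f :: "nat \<Rightarrow> 'a::euclidean_space \<Rightarrow> 'a"
  assumes "\<And>i. i \<in> set u \<Longrightarrow> similitude (f i) (lam i)"
  shows "similitude (fwinv f u) (inverse (prod_list (map lam u)))"
  using assms
proof (induction u)
  case Nil
  then show ?case by (simp add: fwinv_def similitude_def)
next
  case (Cons i u)
  then have "similitude (inv (f i) \<circ> fwinv f u) (inverse (lam i) * inverse (prod_list (map lam u)))"
    by (intro similitude_comp similitude_inv) auto
  then show ?case by (simp add: fwinv_def comp_def)
qed

lemma sim_ratio_eq:
  fixes g :: "'a::euclidean_space \<Rightarrow> 'a"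
  assumes "similitude g r"
  shows "sim_ratio g = r"
proof -
  define b :: 'a where "b = (SOME i. i \<in> Basis)"
  have "b \<noteq> 0"
    unfolding b_def by (rule nonzero_Basis[OF SOME_Basis])
  have "similitude g (sim_ratio g)"
    unfolding sim_ratio_def using assms by (rule someI)
  then have "sim_ratio g * dist 0 b = dist (g 0) (g b)"
    by (simp add: similitude_def)
  also have "\<dots> = r * dist 0 b"
    using assms by (simp add: similitude_def)
  finally have "sim_ratio g * dist 0 b = r * dist 0 b" .
  with \<open>b \<noteq> 0\<close> show ?thesis
    by simp
qed

lemma prod_list_map_power:
  "prod_list (map (\<lambda>i. s ^ a i) u) = (s::'a::comm_monoid_mult) ^ sum_list (map a u)"
  by (induction u) (simp_all add: power_add)

lemma cost_of_nat: "cost (\<lambda>i. real (a i)) u = real (sum_list (map a u))"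
  by (induction u) (simp_all add: cost_def)

lemma cost_pref_Suc: "cost c (pref j (Suc l)) = cost c (pref j l) + c (j l)"
  by (simp add: cost_def pref_def)

lemma set_pref_seqs: "w \<in> seqs m \<Longrightarrow> set (pref w k) \<subseteq> {..<m}"
  by (auto simp: pref_def seqs_def)

lemma cost_pref_overshoot:
  assumes "cost c (pref j (l - 1)) \<le> x" "x < cost c (pref j l)"
  obtains l' where "l = Suc l'" "cost c (pref j l) \<le> x + c (j l')"
proof (cases l)
  case 0
  with assms show ?thesis by simp
next
  case (Suc l')
  with assms show ?thesis
    using that cost_pref_Suc[of c j l'] by simp
qed

lemma tile_sim_ratio:
  fixes f :: "nat \<Rightarrow> 'a::euclidean_space \<Rightarrow> 'a"
  assumes sim: "\<And>i. i < m \<Longrightarrow> similitude (f i) (s ^ a i)"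
    and "s > 0"
    and bound: "\<And>i. i < m \<Longrightarrow> a i \<le> M"
    and w: "w \<in> seqs m"
    and t: "t \<in> tiling m f (\<lambda>i. real (a i)) T w"
  shows "\<exists>d\<le>M. sim_ratio (fst t) = s ^ d"
proof -
  let ?c = "\<lambda>i. real (a i)"
  obtain k j l where j: "j \<in> seqs m"
    and below: "cost ?c (pref j (l - 1)) \<le> cost ?c (pref w k)"
    and above: "cost ?c (pref w k) < cost ?c (pref j l)"
    and g: "fst t = fwinv f (pref w k) \<circ> fw f (pref j l)"
    using t unfolding tiling_def by auto
  obtain l' where "l = Suc l'" and over: "cost ?c (pref j l) \<le> cost ?c (pref w k) + ?c (j l')"
    using cost_pref_overshoot[OF below above] .
  define Aw where "Aw = sum_list (map a (pref w k))"
  define Aj where "Aj = sum_list (map a (pref j l))"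
  have "j l' < m"
    using j by (simp add: seqs_def)
  then have exponents: "Aw < Aj" "Aj \<le> Aw + M"
    using above over bound[of "j l'"] unfolding Aw_def Aj_def cost_of_nat by simp_all
  have "similitude (fwinv f (pref w k)) (inverse (s ^ Aw))"
    using similitude_fwinv[of "pref w k" f "\<lambda>i. s ^ a i"] set_pref_seqs[OF w] sim
    unfolding Aw_def prod_list_map_power by blast
  moreover have "similitude (fw f (pref j l)) (s ^ Aj)"
    using similitude_fw[of "pref j l" f "\<lambda>i. s ^ a i"] set_pref_seqs[OF j] sim
    unfolding Aj_def prod_list_map_power by blast
  ultimately have "similitude (fst t) (inverse (s ^ Aw) * s ^ Aj)"
    unfolding g by (rule similitude_comp)
  moreover have "inverse (s ^ Aw) * s ^ Aj = s ^ (Aj - Aw)"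
    using \<open>s > 0\<close> \<open>Aw < Aj\<close> by (simp add: power_diff field_simps)
  ultimately have "sim_ratio (fst t) = s ^ (Aj - Aw)"
    by (simp add: sim_ratio_eq)
  moreover have "Aj - Aw \<le> M"
    using exponents by simp
  ultimately show ?thesis
    by (intro exI[of _ "Aj - Aw"] conjI)
qed

lemma commensurate_if_power_ratios:
  assumes "s > 0"
    and "\<And>t. t \<in> P \<Longrightarrow> \<exists>d\<le>M. sim_ratio (fst t) = s ^ d"
  shows "commensurate P"
proof -
  have "\<exists>k. sim_ratio (fst t) = s ^ M * inverse s ^ k" if "t \<in> P" for t
  proof -
    obtain d where "d \<le> M" "sim_ratio (fst t) = s ^ d"
      using assms(2) \<open>t \<in> P\<close> by blast
    then have "sim_ratio (fst t) = s ^ M * inverse s ^ (M - d)"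
      using \<open>s > 0\<close> by (simp add: power_diff field_simps)
    then show ?thesis ..
  qed
  then show ?thesis
    unfolding commensurate_def using \<open>s > 0\<close> by (metis inverse_positive_iff_positive zero_less_power)
qed

theorem theorem2:
  fixes f :: "nat \<Rightarrow> real ^ 'n \<Rightarrow> real ^ 'n"
    and lam :: "nat \<Rightarrow> real" and a :: "nat \<Rightarrow> nat" and m :: nat and s :: real
  assumes m2: "m \<ge> 2"
    and distinct: "\<exists>i<m. \<exists>j<m. f i \<noteq> f j"
    and sim: "\<And>i x y. i < m \<Longrightarrow> dist (f i x) (f i y) = lam i * dist x y"
    and lam: "\<And>i. i < m \<Longrightarrow> 0 < lam i \<and> lam i < 1"
    and osc: "OSC m f"
    and s_def: "s = Max (lam ` {..<m})"
    and a: "\<And>i. i < m \<Longrightarrow> lam i = s ^ a i"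
  shows "(\<forall>T w. closed T \<longrightarrow> w \<in> seqs m \<longrightarrow>
            commensurate (tiling m f (\<lambda>i. real (a i)) T w))
       \<and> (\<forall>w\<in>seqs m. commensurate (tiling m f (\<lambda>i. real (a i)) (attractor m f) w))
       \<and> (\<forall>w\<in>seqs m. commensurate (tiling m f (\<lambda>i. real (a i)) (closure (central_open_set m f)) w))"
proof -
  have "s \<in> lam ` {..<m}"
    unfolding s_def using m2 by (intro Max_in) (auto simp: lessThan_empty_iff)
  then have "s > 0"
    using lam by auto
  have similitudes: "similitude (f i) (s ^ a i)" if "i < m" for i
    using sim lam a that by (simp add: similitude_def)
  have bound: "a i \<le> Max (a ` {..<m})" if "i < m" for i
    using that by simp
  have "commensurate (tiling m f (\<lambda>i. real (a i)) T w)" if "w \<in> seqs m" for T w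
    by (rule commensurate_if_power_ratios[OF \<open>s > 0\<close>])
      (rule tile_sim_ratio[OF similitudes \<open>s > 0\<close> bound that])
  then show ?thesis
    by blast
qed

end
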